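(* Let $X\subseteq\mathbb{C}^n$ be a complex analytic set and $\mathcal M\subseteq\mathcal O_X^p$ a sheaf of $\mathcal O_X$-submodules. Then $(\mathcal M_{S_1})_x\subseteq(\mathcal M_{S_2})_x$ for every $x\in X$.
   Context: $\pi_1,\pi_2:X\times X\to X$ are the projections. For $h\in\mathcal O_X^p$, $h_D=(h\circ\pi_1,h\circ\pi_2)\in\mathcal O_{X\times X}^{2p}$; for a submodule $N\subseteq\mathcal O_X^q$ (in particular an ideal, $q=1$), $N_D$ is the $\mathcal O_{X\times X}$-submodule of $\mathcal O^{2q}_{X\times X}$ generated by $\{h_D:h\in N\}$. $\overline{\cdot}$ denotes integral closure. For an ideal $I\subseteq\mathcal O_{X,x}$, its Lipschitz saturation is $I_S=\{f\in\mathcal O_{X,x}: f_D\in\overline{I_D}\text{ at }(x,x)\}$. For analytic $\psi=(\psi_1,\dots,\psi_p):X\to\mathrm{Hom}(\mathbb C^p,\mathbb C)$, $\psi\cdot h=\sum\psi_ih_i$ and $\psi\cdot\mathcal M$ is the ideal generated by $\{\psi\cdot h:h\in\mathcal M\}$. Definitions: $(\mathcal M_{S_1})_x=\{h\in\mathcal O_{X,x}^p: h_D\in\overline{\mathcal M_D}\text{ at }(x,x)\}$; $(\mathcal M_{S_2})_x=\{h\in\mathcal O_{X,x}^p:\psi\cdot h\in(\psi\cdot\mathcal M)_S\text{ at }x\text{ for all analytic }\psi\}$. *)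

theory Defs
  imports "HOL-Analysis.Analysis"
begin

definition cholo_on :: "(complex^'m) set \<Rightarrow> (complex^'m \<Rightarrow> complex) \<Rightarrow> bool" where
  "cholo_on U f \<longleftrightarrow> (\<forall>x\<in>U. \<exists>L. linear L \<and> (\<forall>c v. L (c *s v) = c * L v)
        \<and> (f has_derivative L) (at x))"

definition analytic_set :: "(complex^'m) set \<Rightarrow> bool" where
  "analytic_set X \<longleftrightarrow> (\<forall>a\<in>X. \<exists>U F. open U \<and> a \<in> U \<and> finite F \<and>
        (\<forall>f\<in>F. cholo_on U f) \<and> X \<inter> U = {z\<in>U. \<forall>f\<in>F. f z = 0})"

(* g represents an element of O_{Y,y} *)
definition agerm :: "(complex^'m) set \<Rightarrow> complex^'m \<Rightarrow> (complex^'m \<Rightarrow> complex) \<Rightarrow> bool" where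
  "agerm Y y g \<longleftrightarrow> (\<exists>U G. open U \<and> y \<in> U \<and> cholo_on U G \<and> (\<forall>z\<in>Y \<inter> U. g z = G z))"

(* h represents an element of O_{Y,y}^q *)
definition vgerm :: "(complex^'m) set \<Rightarrow> complex^'m \<Rightarrow> (complex^'m \<Rightarrow> complex^'q) \<Rightarrow> bool" where
  "vgerm Y y h \<longleftrightarrow> (\<forall>i. agerm Y y (\<lambda>z. h z $ i))"

(* N is (the set of representatives of) an O_{X,x}-submodule of O_{X,x}^q *)
definition submod_stalk :: "(complex^'m) set \<Rightarrow> complex^'m \<Rightarrow> (complex^'m \<Rightarrow> complex^'q) set \<Rightarrow> bool" where
  "submod_stalk X x N \<longleftrightarrow>
     (\<forall>h\<in>N. vgerm X x h) \<and> (\<lambda>z. 0) \<in> N \<and>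
     (\<forall>g\<in>N. \<forall>h\<in>N. (\<lambda>z. g z + h z) \<in> N) \<and>
     (\<forall>a h. agerm X x a \<longrightarrow> h \<in> N \<longrightarrow> (\<lambda>z. a z *s h z) \<in> N) \<and>
     (\<forall>h\<in>N. \<forall>h'. (\<exists>U. open U \<and> x \<in> U \<and> (\<forall>z\<in>X \<inter> U. h' z = h z)) \<longrightarrow> h' \<in> N)"

definition gen_mod :: "(complex^'m) set \<Rightarrow> complex^'m \<Rightarrow> (complex^'m \<Rightarrow> complex^'q) set
     \<Rightarrow> (complex^'m \<Rightarrow> complex^'q) set" where
  "gen_mod Y y S = {g. \<exists>(k::nat) a s. (\<forall>i<k. agerm Y y (a i) \<and> s i \<in> S) \<and>
       (\<exists>U. open U \<and> y \<in> U \<and> (\<forall>z\<in>Y \<inter> U. g z = (\<Sum>i<k. a i z *s s i z)))}"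

definition acurve :: "(complex^'m) set \<Rightarrow> complex^'m \<Rightarrow> (complex \<Rightarrow> complex^'m) \<Rightarrow> bool" where
  "acurve Y y \<phi> \<longleftrightarrow> \<phi> 0 = y \<and>
     (\<exists>r>0. (\<forall>i. (\<lambda>t. \<phi> t $ i) holomorphic_on ball 0 r) \<and> \<phi> ` ball 0 r \<subseteq> Y)"

(* integral closure of a submodule N of O_{Y,y}^q (curve criterion, Gaffney):
   h \<in> closure iff for every curve \<phi>, h\<circ>\<phi> \<in> O_1 \<cdot> \<phi>^*(N) *)
definition int_cl :: "(complex^'m) set \<Rightarrow> complex^'m \<Rightarrow> (complex^'m \<Rightarrow> complex^'q) set
     \<Rightarrow> (complex^'m \<Rightarrow> complex^'q) set" where
  "int_cl Y y N = {h. vgerm Y y h \<and> (\<forall>\<phi>. acurve Y y \<phi> \<longrightarrow>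
       (\<exists>e>0. \<exists>(k::nat) a s. (\<forall>i<k. a i holomorphic_on ball 0 e \<and> s i \<in> N) \<and>
          (\<forall>t\<in>ball 0 e. h (\<phi> t) = (\<Sum>i<k. a i t *s s i (\<phi> t)))))}"

(* the double X x X inside C^n x C^n = C^(n+n) *)
definition p1 :: "complex^('n+'n) \<Rightarrow> complex^'n" where
  "p1 z = (\<chi> j. z $ Inl j)"

definition p2 :: "complex^('n+'n) \<Rightarrow> complex^'n" where
  "p2 z = (\<chi> j. z $ Inr j)"

definition dpt :: "complex^'n \<Rightarrow> complex^'n \<Rightarrow> complex^('n+'n)" where
  "dpt a b = (\<chi> i. case i of Inl j \<Rightarrow> a $ j | Inr j \<Rightarrow> b $ j)"

definition dbl :: "(complex^'n) set \<Rightarrow> (complex^('n+'n)) set" where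
  "dbl X = {z. p1 z \<in> X \<and> p2 z \<in> X}"

definition dfun :: "(complex^'n \<Rightarrow> complex^'q) \<Rightarrow> complex^('n+'n) \<Rightarrow> complex^('q+'q)" where
  "dfun h z = (\<chi> i. case i of Inl j \<Rightarrow> h (p1 z) $ j | Inr j \<Rightarrow> h (p2 z) $ j)"

(* {h \<in> O_{X,x}^q : h_D \<in> closure(N_D) at (x,x)}; for q = 1 this is the
   Lipschitz saturation of the ideal N *)
definition lip_sat :: "(complex^'n) set \<Rightarrow> complex^'n \<Rightarrow> (complex^'n \<Rightarrow> complex^'q) set
     \<Rightarrow> (complex^'n \<Rightarrow> complex^'q) set" where
  "lip_sat X x N = {h. vgerm X x h \<and>
      dfun h \<in> int_cl (dbl X) (dpt x x) (gen_mod (dbl X) (dpt x x) (dfun ` N))}"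

definition psi_dot :: "(complex^'n \<Rightarrow> complex^'p) \<Rightarrow> (complex^'n \<Rightarrow> complex^'p) \<Rightarrow> complex^'n \<Rightarrow> complex^1" where
  "psi_dot \<psi> h z = (\<chi> _. \<Sum>i\<in>UNIV. \<psi> z $ i * h z $ i)"

definition MS1 :: "(complex^'n) set \<Rightarrow> (complex^'n \<Rightarrow> (complex^'n \<Rightarrow> complex^'p) set) \<Rightarrow> complex^'n
     \<Rightarrow> (complex^'n \<Rightarrow> complex^'p) set" where
  "MS1 X M x = lip_sat X x (M x)"

definition MS2 :: "(complex^'n) set \<Rightarrow> (complex^'n \<Rightarrow> (complex^'n \<Rightarrow> complex^'p) set) \<Rightarrow> complex^'n
     \<Rightarrow> (complex^'n \<Rightarrow> complex^'p) set" where
  "MS2 X M x = {h. vgerm X x h \<and> (\<forall>\<psi>. vgerm X x \<psi> \<longrightarrow>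
      psi_dot \<psi> h \<in> lip_sat X x (gen_mod X x (psi_dot \<psi> ` M x)))}"

end

theory Submission
  imports Defs
begin

text \<open>The map \<open>v \<mapsto> \<psi> \<cdot> v\<close> is linear at each point, and applying a pointwise linear map
  sends a germ in the integral closure of a module (curve criterion) to the integral closure of
  the image module: the expansion \<open>h \<circ> \<phi> = \<Sum> a\<^sub>i (s\<^sub>i \<circ> \<phi>)\<close> along a curve is simply carried
  along. On the double, the blockwise contraction with \<open>(\<psi> \<circ> \<pi>\<^sub>1, \<psi> \<circ> \<pi>\<^sub>2)\<close> turns \<open>h\<^sub>D\<close> into
  \<open>(\<psi> \<cdot> h)\<^sub>D\<close> and the generators \<open>m\<^sub>D\<close> of \<open>\<M>\<^sub>D\<close> into generators \<open>(\<psi> \<cdot> m)\<^sub>D\<close> of \<open>(\<psi> \<cdot> \<M>)\<^sub>D\<close>,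
  so \<open>h\<^sub>D \<in> \<M>\<^sub>D\<close>-closure gives \<open>(\<psi> \<cdot> h)\<^sub>D \<in> (\<psi> \<cdot> \<M>)\<^sub>D\<close>-closure.\<close>

lemma cholo_on_subset: "cholo_on U f \<Longrightarrow> V \<subseteq> U \<Longrightarrow> cholo_on V f"
  unfolding cholo_on_def by blast

lemma cholo_on_const: "cholo_on U (\<lambda>z. c)"
  unfolding cholo_on_def
  by (intro ballI exI[of _ "\<lambda>v. 0"]) (auto intro: linearI derivative_intros)

lemma cholo_on_add:
  assumes "cholo_on U F" "cholo_on U G"
  shows "cholo_on U (\<lambda>z. F z + G z)"
  unfolding cholo_on_def
proof
  fix x assume "x \<in> U"
  then obtain LF LG where F: "\<forall>c v. LF (c *s v) = c * LF v" "(F has_derivative LF) (at x)"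
    and G: "\<forall>c v. LG (c *s v) = c * LG v" "(G has_derivative LG) (at x)"
    using assms unfolding cholo_on_def by (metis (no_types))
  have d: "((\<lambda>z. F z + G z) has_derivative (\<lambda>v. LF v + LG v)) (at x)"
    using F(2) G(2) by (rule has_derivative_add)
  then show "\<exists>L. linear L \<and> (\<forall>c v. L (c *s v) = c * L v) \<and> ((\<lambda>z. F z + G z) has_derivative L) (at x)"
    using has_derivative_linear[OF d] F(1) G(1) by (auto simp: algebra_simps)
qed

lemma cholo_on_mult:
  assumes "cholo_on U F" "cholo_on U G"
  shows "cholo_on U (\<lambda>z. F z * G z)"
  unfolding cholo_on_def
proof
  fix x assume "x \<in> U"
  then obtain LF LG where F: "\<forall>c v. LF (c *s v) = c * LF v" "(F has_derivative LF) (at x)"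
    and G: "\<forall>c v. LG (c *s v) = c * LG v" "(G has_derivative LG) (at x)"
    using assms unfolding cholo_on_def by (metis (no_types))
  have d: "((\<lambda>z. F z * G z) has_derivative (\<lambda>v. F x * LG v + LF v * G x)) (at x)"
    using F(2) G(2) by (rule has_derivative_mult)
  then show "\<exists>L. linear L \<and> (\<forall>c v. L (c *s v) = c * L v) \<and> ((\<lambda>z. F z * G z) has_derivative L) (at x)"
    using has_derivative_linear[OF d] F(1) G(1) by (auto simp: algebra_simps)
qed

lemma scaleR_vec_complex: "r *\<^sub>R (v :: complex^'n) = complex_of_real r *s v"
  by (auto simp: vec_eq_iff) (simp add: scaleR_conv_of_real)

lemma linear_if_vector_space_linear:
  fixes P :: "complex^'a \<Rightarrow> complex^'b"
  assumes "Vector_Spaces.linear (*s) (*s) P"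
  shows "linear P"
  by (rule linearI)
    (simp_all add: scaleR_vec_complex vec.linear_add[OF assms] vec.linear_scale[OF assms])

lemma cholo_on_compose_linear:
  fixes P :: "complex^'a \<Rightarrow> complex^'b"
  assumes lin: "Vector_Spaces.linear (*s) (*s) P" and F: "cholo_on U F"
  shows "cholo_on (P -` U) (\<lambda>z. F (P z))"
  unfolding cholo_on_def
proof
  fix x assume "x \<in> P -` U"
  then obtain L where L: "\<forall>c v. L (c *s v) = c * L v" "(F has_derivative L) (at (P x))"
    using F unfolding cholo_on_def by blast
  have "(P has_derivative P) (at x)"
    using lin by (simp add: linear_if_vector_space_linear linear_imp_has_derivative)
  from has_derivative_compose[OF this L(2)]
  have d: "((\<lambda>z. F (P z)) has_derivative (\<lambda>v. L (P v))) (at x)"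
    by (simp add: o_def)
  then show "\<exists>L. linear L \<and> (\<forall>c v. L (c *s v) = c * L v) \<and> ((\<lambda>z. F (P z)) has_derivative L) (at x)"
    using has_derivative_linear[OF d] L(1) vec.linear_scale[OF lin] by auto
qed

lemma agerm_const: "agerm Y y (\<lambda>z. c)"
  unfolding agerm_def by (intro exI[of _ UNIV] exI[of _ "\<lambda>z. c"]) (auto intro: cholo_on_const)

lemma agerm_add:
  assumes "agerm Y y f" "agerm Y y g"
  shows "agerm Y y (\<lambda>z. f z + g z)"
proof -
  obtain U F V G where "open U" "y \<in> U" "cholo_on U F" "\<forall>z\<in>Y \<inter> U. f z = F z"
    and "open V" "y \<in> V" "cholo_on V G" "\<forall>z\<in>Y \<inter> V. g z = G z"
    using assms unfolding agerm_def by meson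
  then show ?thesis
    unfolding agerm_def
    by (intro exI[of _ "U \<inter> V"] exI[of _ "\<lambda>z. F z + G z"])
      (auto intro!: cholo_on_add elim: cholo_on_subset)
qed

lemma agerm_mult:
  assumes "agerm Y y f" "agerm Y y g"
  shows "agerm Y y (\<lambda>z. f z * g z)"
proof -
  obtain U F V G where "open U" "y \<in> U" "cholo_on U F" "\<forall>z\<in>Y \<inter> U. f z = F z"
    and "open V" "y \<in> V" "cholo_on V G" "\<forall>z\<in>Y \<inter> V. g z = G z"
    using assms unfolding agerm_def by meson
  then show ?thesis
    unfolding agerm_def
    by (intro exI[of _ "U \<inter> V"] exI[of _ "\<lambda>z. F z * G z"])
      (auto intro!: cholo_on_mult elim: cholo_on_subset)
qed

lemma agerm_sum:
  assumes "finite I" "\<And>i. i \<in> I \<Longrightarrow> agerm Y y (f i)"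
  shows "agerm Y y (\<lambda>z. \<Sum>i\<in>I. f i z)"
  using assms by (induction I rule: finite_induct) (auto intro: agerm_add agerm_const)

lemma agerm_compose_linear:
  fixes P :: "complex^'a \<Rightarrow> complex^'b"
  assumes lin: "Vector_Spaces.linear (*s) (*s) P"
    and g: "agerm Y (P y) g" and maps: "\<And>z. z \<in> Z \<Longrightarrow> P z \<in> Y"
  shows "agerm Z y (\<lambda>z. g (P z))"
proof -
  obtain U F where U: "open U" "P y \<in> U" "cholo_on U F" "\<forall>z\<in>Y \<inter> U. g z = F z"
    using g unfolding agerm_def by blast
  have "bounded_linear P"
    using linear_if_vector_space_linear[OF lin] by (simp add: linear_conv_bounded_linear)
  then have "continuous_on UNIV P"
    by (rule linear_continuous_on)
  then have "open (P -` U)"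
    using U(1) open_vimage by blast
  with U show ?thesis
    unfolding agerm_def using maps
    by (intro exI[of _ "P -` U"] exI[of _ "\<lambda>z. F (P z)"]) (auto intro!: cholo_on_compose_linear lin)
qed

lemma vgerm_psi_dot:
  assumes "vgerm X x \<psi>" "vgerm X x h"
  shows "vgerm X x (psi_dot \<psi> h)"
  using assms unfolding vgerm_def psi_dot_def by (auto intro!: agerm_sum agerm_mult)

lemma linear_p1: "Vector_Spaces.linear (*s) (*s) p1"
  by unfold_locales (simp_all add: p1_def vec_eq_iff)

lemma linear_p2: "Vector_Spaces.linear (*s) (*s) p2"
  by unfold_locales (simp_all add: p2_def vec_eq_iff)

lemma p1_dpt [simp]: "p1 (dpt a b) = a"
  by (simp add: p1_def dpt_def vec_eq_iff)

lemma p2_dpt [simp]: "p2 (dpt a b) = b"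
  by (simp add: p2_def dpt_def vec_eq_iff)

lemma vgerm_dfun:
  assumes "vgerm X x g"
  shows "vgerm (dbl X) (dpt x x) (dfun g)"
  unfolding vgerm_def
proof
  fix i
  have "agerm (dbl X) (dpt x x) (\<lambda>z. g (p1 z) $ j)" for j
    by (rule agerm_compose_linear[OF linear_p1]) (use assms in \<open>auto simp: vgerm_def dbl_def\<close>)
  moreover have "agerm (dbl X) (dpt x x) (\<lambda>z. g (p2 z) $ j)" for j
    by (rule agerm_compose_linear[OF linear_p2]) (use assms in \<open>auto simp: vgerm_def dbl_def\<close>)
  ultimately show "agerm (dbl X) (dpt x x) (\<lambda>z. dfun g z $ i)"
    by (cases i) (simp_all add: dfun_def)
qed

lemma gen_mod_generator: "s \<in> S \<Longrightarrow> s \<in> gen_mod Y y S"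
  unfolding gen_mod_def
  by (intro CollectI exI[of _ 1] exI[of _ "\<lambda>_ _. 1"] exI[of _ "\<lambda>_. s"] conjI exI[of _ UNIV])
    (simp_all add: agerm_const)

lemma gen_mod_pointwise_linear_image:
  assumes lin: "\<And>z. Vector_Spaces.linear (*s) (*s) (L z)"
    and gens: "\<And>s. s \<in> S \<Longrightarrow> (\<lambda>z. L z (s z)) \<in> S'"
    and g: "g \<in> gen_mod Y y S"
  shows "(\<lambda>z. L z (g z)) \<in> gen_mod Y y S'"
proof -
  obtain k a s U where as: "\<forall>i<(k::nat). agerm Y y (a i) \<and> s i \<in> S"
    and U: "open U" "y \<in> U" "\<forall>z\<in>Y \<inter> U. g z = (\<Sum>i<k. a i z *s s i z)"
    using g unfolding gen_mod_def by blast
  have "\<forall>z\<in>Y \<inter> U. L z (g z) = (\<Sum>i<k. a i z *s L z (s i z))"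
    using U(3) by (simp add: vec.linear_sum[OF lin] vec.linear_scale[OF lin])
  with as U(1,2) show ?thesis
    unfolding gen_mod_def
    by (intro CollectI exI[of _ k] exI[of _ a] exI[of _ "\<lambda>i z. L z (s i z)"] conjI exI[of _ U])
      (simp_all add: gens)
qed

lemma int_cl_pointwise_linear_image:
  assumes lin: "\<And>z. Vector_Spaces.linear (*s) (*s) (L z)"
    and gens: "\<And>s. s \<in> N \<Longrightarrow> (\<lambda>z. L z (s z)) \<in> N'"
    and germ: "vgerm Y y (\<lambda>z. L z (h z))"
    and h: "h \<in> int_cl Y y N"
  shows "(\<lambda>z. L z (h z)) \<in> int_cl Y y N'"
  unfolding int_cl_def
proof (intro CollectI conjI allI impI germ)
  fix \<phi> assume "acurve Y y \<phi>"
  then obtain e k a s where "e > 0"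
    and as: "\<forall>i<(k::nat). a i holomorphic_on ball 0 e \<and> s i \<in> N"
    and expand: "\<forall>t\<in>ball 0 e. h (\<phi> t) = (\<Sum>i<k. a i t *s s i (\<phi> t))"
    using h unfolding int_cl_def by blast
  have "\<forall>t\<in>ball 0 e. L (\<phi> t) (h (\<phi> t)) = (\<Sum>i<k. a i t *s L (\<phi> t) (s i (\<phi> t)))"
    using expand by (simp add: vec.linear_sum[OF lin] vec.linear_scale[OF lin])
  with \<open>e > 0\<close> as show "\<exists>e>0. \<exists>(k::nat) a s'. (\<forall>i<k. a i holomorphic_on ball 0 e \<and> s' i \<in> N') \<and>
      (\<forall>t\<in>ball 0 e. L (\<phi> t) (h (\<phi> t)) = (\<Sum>i<k. a i t *s s' i (\<phi> t)))"
    by (intro exI[of _ e] conjI exI[of _ k] exI[of _ a] exI[of _ "\<lambda>i z. L z (s i z)"])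
      (simp_all add: gens)
qed

definition dpsi_dot :: "(complex^'n \<Rightarrow> complex^'p) \<Rightarrow> complex^('n+'n) \<Rightarrow> complex^('p+'p) \<Rightarrow> complex^(1+1)"
  where "dpsi_dot \<psi> z v = (\<chi> i. case i of
      Inl _ \<Rightarrow> \<Sum>j\<in>UNIV. \<psi> (p1 z) $ j * v $ Inl j
    | Inr _ \<Rightarrow> \<Sum>j\<in>UNIV. \<psi> (p2 z) $ j * v $ Inr j)"

lemma linear_dpsi_dot: "Vector_Spaces.linear (*s) (*s) (dpsi_dot \<psi> z)"
  by unfold_locales
    (auto simp: dpsi_dot_def vec_eq_iff algebra_simps sum.distrib sum_distrib_left split: sum.split)

lemma dpsi_dot_dfun: "(\<lambda>z. dpsi_dot \<psi> z (dfun h z)) = dfun (psi_dot \<psi> h)"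
  by (auto simp: fun_eq_iff vec_eq_iff dpsi_dot_def dfun_def psi_dot_def split: sum.split)

lemma lip_sat_psi_dot:
  assumes \<psi>: "vgerm X x \<psi>" and h: "h \<in> lip_sat X x N"
  shows "psi_dot \<psi> h \<in> lip_sat X x (gen_mod X x (psi_dot \<psi> ` N))"
proof -
  have germ: "vgerm X x (psi_dot \<psi> h)"
    and hD: "dfun h \<in> int_cl (dbl X) (dpt x x) (gen_mod (dbl X) (dpt x x) (dfun ` N))"
    using vgerm_psi_dot[OF \<psi>] h by (simp_all add: lip_sat_def)
  have gens: "(\<lambda>z. dpsi_dot \<psi> z (s z)) \<in> gen_mod (dbl X) (dpt x x) (dfun ` gen_mod X x (psi_dot \<psi> ` N))"
    if "s \<in> gen_mod (dbl X) (dpt x x) (dfun ` N)" for s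
  proof (rule gen_mod_pointwise_linear_image[OF linear_dpsi_dot _ that])
    fix m assume "m \<in> dfun ` N"
    then show "(\<lambda>z. dpsi_dot \<psi> z (m z)) \<in> dfun ` gen_mod X x (psi_dot \<psi> ` N)"
      by (auto simp: dpsi_dot_dfun intro!: imageI gen_mod_generator)
  qed
  have "dfun (psi_dot \<psi> h) \<in> int_cl (dbl X) (dpt x x)
      (gen_mod (dbl X) (dpt x x) (dfun ` gen_mod X x (psi_dot \<psi> ` N)))"
    using int_cl_pointwise_linear_image[OF linear_dpsi_dot gens _ hD] vgerm_dfun[OF germ]
    by (simp add: dpsi_dot_dfun)
  with germ show ?thesis
    by (simp add: lip_sat_def)
qed

theorem propositionP23:
  fixes X :: "(complex^'n) set"
    and M :: "complex^'n \<Rightarrow> (complex^'n \<Rightarrow> complex^'p) set"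
  assumes "analytic_set X"
    and "\<forall>x\<in>X. submod_stalk X x (M x)"
  shows "\<forall>x\<in>X. MS1 X M x \<subseteq> MS2 X M x"
proof (intro ballI subsetI)
  fix x h assume "h \<in> MS1 X M x"
  then have h: "h \<in> lip_sat X x (M x)"
    by (simp add: MS1_def)
  then have "vgerm X x h"
    by (simp add: lip_sat_def)
  with h show "h \<in> MS2 X M x"
    unfolding MS2_def by (blast intro: lip_sat_psi_dot)
qed

end
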